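(* Let $\varepsilon\in(0,1)$ and let $\tau,\alpha,f_0,g$ be as defined in the context. For every $x\in\{0,1\}^n$ with $f(x)\ge f_0$, \[E[g(\mathcal{M}(x))]\le\frac{1}{e}(1+\varepsilon)\,g(x).\]
   Context: $f$ is OneMax, $f(x)=\sum_i x_i$. $\mathcal{M}$ is standard bit mutation: $\mathcal{M}(x)$ flips each bit of $x$ independently with probability $1/n$. Potential function: $\tau=\frac{4e}{\varepsilon}$, $\alpha=1-\frac1\tau\ln\big(1+\frac1\tau\big)$ (which lies in $(\tfrac34,1)$), $f_0=\lceil\alpha n\rceil$, and $g:\{0,1\}^n\to\mathbb{R}$ is $g(x)=\tau^{f(x)-f_0}$ if $f(x)\ge f_0$ and $g(x)=0$ otherwise. *)

theory Defs
  imports Complex_Main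
begin

text \<open>Bit strings of length n are represented as bool lists of length n.\<close>

definition onemax :: "bool list \<Rightarrow> nat" where
  "onemax x = length (filter id x)"

definition tau :: "real \<Rightarrow> real" where
  "tau eps = 4 * exp 1 / eps"

definition alpha :: "real \<Rightarrow> real" where
  "alpha eps = 1 - (1 / tau eps) * ln (1 + 1 / tau eps)"

definition f0 :: "real \<Rightarrow> nat \<Rightarrow> int" where
  "f0 eps n = \<lceil>alpha eps * real n\<rceil>"

definition pot :: "real \<Rightarrow> nat \<Rightarrow> bool list \<Rightarrow> real" where
  "pot eps n x = (if int (onemax x) \<ge> f0 eps n
                   then tau eps ^ nat (int (onemax x) - f0 eps n) else 0)"

definition mut_prob :: "nat \<Rightarrow> bool list \<Rightarrow> bool list \<Rightarrow> real" where
  "mut_prob n x y = (\<Prod>i<n. if x ! i = y ! i then 1 - 1 / real n else 1 / real n)"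

text \<open>Expectation of h(M(x)) for standard bit mutation M.\<close>
definition mut_expect :: "nat \<Rightarrow> (bool list \<Rightarrow> real) \<Rightarrow> bool list \<Rightarrow> real" where
  "mut_expect n h x = (\<Sum>y\<in>{y. length y = n}. mut_prob n x y * h y)"

end

theory Submission
  imports Defs
begin

text \<open>
  The potential is dominated by \<open>\<tau> ^ f(y) / \<tau> ^ f\<^sub>0\<close>, with equality at \<open>x\<close>, and the
  expectation of \<open>\<tau> ^ f(M(x))\<close> factorises over the independent bits: a one-bit of \<open>x\<close>
  contributes \<open>(1 - 1/n) \<tau> + 1/n\<close> and a zero-bit \<open>\<tau>/n + 1 - 1/n\<close>.  Bounding each factor
  via \<open>1 + z \<le> exp z\<close> turns the product for \<open>k = f(x)\<close> into \<open>\<tau> ^ k\<close> times an exponential whose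
  exponent decreases in \<open>k\<close>; the choice of \<open>\<alpha>\<close> makes it at most \<open>2/\<tau> - 1\<close> once \<open>k \<ge> \<alpha> n\<close>,
  and \<open>2/\<tau> = \<epsilon>/(2e) \<le> ln (1 + \<epsilon>)\<close>.
\<close>

lemma sum_lists_length_prod:
  fixes h :: "nat \<Rightarrow> 'a::finite \<Rightarrow> 'b::comm_semiring_1"
  shows "(\<Sum>y | length y = n. \<Prod>i<n. h i (y ! i)) = (\<Prod>i<n. \<Sum>b\<in>UNIV. h i b)"
proof (induction n arbitrary: h)
  case 0
  then show ?case by simp
next
  case (Suc n)
  have lists_Suc: "{y. length y = Suc n} = (\<lambda>(b, ys). b # ys) ` (UNIV \<times> {ys. length ys = n})"
    by (auto simp: length_Suc_conv image_iff)
  have "inj_on (\<lambda>(b, ys). b # ys) (UNIV \<times> {ys :: 'a list. length ys = n})"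
    by (auto simp: inj_on_def)
  then have "(\<Sum>y | length y = Suc n. \<Prod>i<Suc n. h i (y ! i))
      = (\<Sum>b\<in>UNIV. \<Sum>ys | length ys = n. h 0 b * (\<Prod>i<n. h (Suc i) (ys ! i)))"
    unfolding lists_Suc
    by (simp add: sum.reindex split_def sum.cartesian_product prod.lessThan_Suc_shift
        del: prod.lessThan_Suc)
  also have "\<dots> = (\<Sum>b\<in>UNIV. h 0 b * (\<Prod>i<n. \<Sum>b\<in>UNIV. h (Suc i) b))"
    by (simp add: Suc.IH[of "\<lambda>i. h (Suc i)"] sum_distrib_left[symmetric])
  also have "\<dots> = (\<Prod>i<Suc n. \<Sum>b\<in>UNIV. h i b)"
    by (simp add: prod.lessThan_Suc_shift sum_distrib_right del: prod.lessThan_Suc)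
  finally show ?case .
qed

lemma onemax_le_length: "onemax x \<le> length x"
  by (simp add: onemax_def)

lemma power_onemax: "t ^ onemax y = (\<Prod>i<length y. if y ! i then t else 1)"
  by (induction y) (auto simp: onemax_def prod.lessThan_Suc_shift simp del: prod.lessThan_Suc)

lemma prod_if_nth_onemax:
  "(\<Prod>i<length x. if x ! i then a else b) = a ^ onemax x * b ^ (length x - onemax x)"
proof (induction x)
  case Nil
  then show ?case by (simp add: onemax_def)
next
  case (Cons c x)
  with onemax_le_length[of x] show ?case
    by (auto simp: onemax_def prod.lessThan_Suc_shift Suc_diff_le mult_ac simp del: prod.lessThan_Suc)
qed

lemma mut_prob_nonneg: "0 \<le> mut_prob n x y"
  unfolding mut_prob_def by (intro prod_nonneg) (auto simp: field_simps)

lemma mut_expect_mono: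
  assumes "\<And>y. length y = n \<Longrightarrow> h y \<le> h' y"
  shows "mut_expect n h x \<le> mut_expect n h' x"
  unfolding mut_expect_def using assms mut_prob_nonneg by (intro sum_mono mult_left_mono) auto

lemma mut_expect_divide: "mut_expect n (\<lambda>y. h y / c) x = mut_expect n h x / c"
  by (simp add: mut_expect_def sum_divide_distrib)

lemma mut_expect_power_onemax:
  assumes "length x = n"
  shows "mut_expect n (\<lambda>y. t ^ onemax y) x
    = ((1 - 1/n) * t + 1/n) ^ onemax x * (t/n + (1 - 1/n)) ^ (n - onemax x)"
proof -
  define h where "h i b = (if x ! i = b then 1 - 1/n else 1/n) * (if b then t else 1)" for i b
  have "mut_prob n x y * t ^ onemax y = (\<Prod>i<n. h i (y ! i))" if "length y = n" for y
    using that by (simp add: mut_prob_def power_onemax h_def prod.distrib)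
  then have "mut_expect n (\<lambda>y. t ^ onemax y) x = (\<Prod>i<n. h i True + h i False)"
    by (simp add: mut_expect_def sum_lists_length_prod UNIV_bool add.commute)
  also have "\<dots> = (\<Prod>i<length x. if x ! i then (1 - 1/n) * t + 1/n else t/n + (1 - 1/n))"
    using assms by (intro prod.cong) (auto simp: h_def algebra_simps)
  also have "\<dots> = ((1 - 1/n) * t + 1/n) ^ onemax x * (t/n + (1 - 1/n)) ^ (length x - onemax x)"
    by (rule prod_if_nth_onemax)
  finally show ?thesis
    using assms by simp
qed

lemma power_le_exp_of_nat_mult:
  fixes z :: real
  assumes "0 \<le> 1 + z"
  shows "(1 + z) ^ m \<le> exp (m * z)"
  unfolding exp_of_nat_mult by (intro power_mono exp_ge_add_one_self assms)

lemma mutation_exponent_le: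
  fixes t :: real and n k :: nat
  assumes t: "1 \<le> t" and n: "1 \<le> n" and k: "k \<le> n"
    and k_large: "(1 - (1/t) * ln (1 + 1/t)) * n \<le> k"
  shows "k * ((1/t - 1) / n) + (n - k) * ((t - 1) / n) \<le> 2/t - 1"
proof -
  define u where "u = 1/t"
  define L where "L = ln (1 + u)"
  define q where "q = k / n"
  have u: "0 < u" "u \<le> 1" "t * u = 1" using t by (auto simp: u_def)
  have L: "0 \<le> L" "L \<le> u" using u by (auto simp: L_def ln_add_one_self_le_self)
  have q: "1 - u * L \<le> q" using k_large n by (simp add: q_def u_def L_def field_simps)
  have "k * ((1/t - 1) / n) + (n - k) * ((t - 1) / n) = (t - 1) - (t - u) * q"
    using k n by (simp add: q_def u_def of_nat_diff field_simps)
  also have "\<dots> \<le> (t - 1) - (t - u) * (1 - u * L)"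
    using q u t by (intro diff_left_mono mult_left_mono) auto
  also have "\<dots> = u - 1 + L - u * u * L"
    using u(3) by algebra
  also have "\<dots> \<le> 2 * u - 1"
    using L mult_nonneg_nonneg[OF zero_le_square[of u] L(1)] by linarith
  finally show ?thesis by (simp add: u_def)
qed

lemma onemax_factors_le_exp:
  fixes t :: real and n k :: nat
  assumes t: "1 \<le> t" and n: "1 \<le> n" and k: "k \<le> n"
    and k_large: "(1 - (1/t) * ln (1 + 1/t)) * n \<le> k"
  shows "((1 - 1/n) * t + 1/n) ^ k * (t/n + (1 - 1/n)) ^ (n - k) \<le> t ^ k * exp (2/t - 1)"
proof -
  have factors: "(1 - 1/n) * t + 1/n = t * (1 + (1/t - 1) / n)" "t/n + (1 - 1/n) = 1 + (t - 1) / n"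
    using t n by (simp_all add: field_simps)
  have "0 \<le> 1/t" "1 \<le> real n"
    using t n by auto
  then have "-1 \<le> (1/t - 1) / n"
    by (subst pos_le_divide_eq) linarith+
  then have nonneg: "0 \<le> 1 + (1/t - 1) / n" "0 \<le> 1 + (t - 1) / n"
    using t by simp_all
  have "((1 - 1/n) * t + 1/n) ^ k * (t/n + (1 - 1/n)) ^ (n - k)
      = t ^ k * ((1 + (1/t - 1) / n) ^ k * (1 + (t - 1) / n) ^ (n - k))"
    unfolding factors by (simp only: power_mult_distrib mult.assoc)
  also have "\<dots> \<le> t ^ k * (exp (k * ((1/t - 1) / n)) * exp ((n - k) * ((t - 1) / n)))"
    using nonneg t by (intro mult_left_mono mult_mono power_le_exp_of_nat_mult) auto
  also have "\<dots> \<le> t ^ k * exp (2/t - 1)"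
    unfolding exp_add[symmetric] using mutation_exponent_le[OF assms] t by (intro mult_left_mono) auto
  finally show ?thesis .
qed

lemma tau_gt_one:
  assumes "0 < eps" "eps < 1"
  shows "1 < tau eps"
proof -
  have "1 < 4 * exp (1::real)" using exp_gt_one[of "1::real"] by linarith
  also have "\<dots> < 4 * exp 1 / eps" using assms by (simp add: field_simps)
  finally show ?thesis by (simp add: tau_def)
qed

lemma exp_two_div_tau_le:
  assumes "0 < eps" "eps < 1"
  shows "exp (2 / tau eps - 1) \<le> (1 + eps) / exp 1"
proof -
  have "2 / tau eps = eps / (2 * exp 1)" by (simp add: tau_def)
  also have "\<dots> \<le> eps / (1 + eps)"
    using assms exp_ge_add_one_self[of 1] by (intro divide_left_mono) auto
  also have "\<dots> \<le> ln (1 + eps)"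
    using ln_le_minus_one[of "1 / (1 + eps)"] assms by (simp add: ln_div field_simps)
  finally have "exp (2 / tau eps - 1) \<le> exp (ln (1 + eps) - 1)"
    by simp
  also have "\<dots> = (1 + eps) / exp 1"
    using assms by (simp add: exp_diff)
  finally show ?thesis .
qed

lemma f0_nonneg:
  assumes "1 \<le> tau eps"
  shows "0 \<le> f0 eps n"
proof -
  have "(1 / tau eps) * ln (1 + 1 / tau eps) \<le> 1 * 1"
    using assms by (intro mult_mono ln_add_one_self_le_self[THEN order_trans]) auto
  then have "0 \<le> alpha eps * n"
    by (simp add: alpha_def)
  then show ?thesis
    unfolding f0_def by linarith
qed

lemma pot_eq_power_onemax:
  assumes "tau eps \<noteq> 0" "0 \<le> f0 eps n" "f0 eps n \<le> onemax y"
  shows "pot eps n y = tau eps ^ onemax y / tau eps ^ nat (f0 eps n)"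
proof -
  have "nat (f0 eps n) \<le> onemax y" and "nat (int (onemax y) - f0 eps n) = onemax y - nat (f0 eps n)"
    using assms by auto
  then show ?thesis
    using assms by (simp add: pot_def power_diff)
qed

lemma pot_le_power_onemax:
  assumes "0 < tau eps" "0 \<le> f0 eps n"
  shows "pot eps n y \<le> tau eps ^ onemax y / tau eps ^ nat (f0 eps n)"
  using assms pot_eq_power_onemax[of eps n y] by (cases "f0 eps n \<le> onemax y") (auto simp: pot_def)

theorem theorem4:
  fixes eps :: real and n :: nat and x :: "bool list"
  assumes "0 < eps" "eps < 1" "n \<ge> 1" "length x = n"
    and "int (onemax x) \<ge> f0 eps n"
  shows "mut_expect n (pot eps n) x \<le> (1 / exp 1) * (1 + eps) * pot eps n x"
proof -
  define t where "t = tau eps"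
  define k where "k = onemax x"
  define F where "F = nat (f0 eps n)"
  have t: "1 \<le> t" using tau_gt_one[OF assms(1,2)] by (simp add: t_def)
  have f0: "0 \<le> f0 eps n" using f0_nonneg t by (simp add: t_def)
  have k_le: "k \<le> n" using onemax_le_length[of x] assms(4) by (simp add: k_def)
  have "alpha eps * n \<le> of_int (f0 eps n)"
    unfolding f0_def by (rule le_of_int_ceiling)
  with assms(5) have k_large: "(1 - (1/t) * ln (1 + 1/t)) * n \<le> k"
    by (simp add: alpha_def t_def k_def)
  have factors: "((1 - 1/n) * t + 1/n) ^ k * (t/n + (1 - 1/n)) ^ (n - k) \<le> t ^ k * exp (2/t - 1)"
    using onemax_factors_le_exp[OF t assms(3) k_le k_large] .
  have "mut_expect n (pot eps n) x \<le> mut_expect n (\<lambda>y. t ^ onemax y / t ^ F) x"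
    using pot_le_power_onemax t f0 by (intro mut_expect_mono) (simp add: t_def F_def)
  also have "\<dots> = ((1 - 1/n) * t + 1/n) ^ k * (t/n + (1 - 1/n)) ^ (n - k) / t ^ F"
    using assms(4) by (simp add: mut_expect_divide mut_expect_power_onemax k_def)
  also have "\<dots> \<le> t ^ k * exp (2/t - 1) / t ^ F"
    using factors t by (simp add: divide_right_mono)
  also have "\<dots> \<le> t ^ k * ((1 + eps) / exp 1) / t ^ F"
    using exp_two_div_tau_le[OF assms(1,2)] t by (intro divide_right_mono mult_left_mono) (auto simp: t_def)
  also have "\<dots> = (1 / exp 1) * (1 + eps) * pot eps n x"
    using pot_eq_power_onemax[of eps n x] assms(5) f0 t by (simp add: t_def k_def F_def)
  finally show ?thesis .
qed

end
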